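(* Let $f:\mathbb{R}^d\to\mathbb{R}$ be convex and differentiable with $L$-Lipschitz gradient, with bounded level sets and a minimizer $x^*$. For $x\in\mathbb{R}^d$ let $\phi_x(\lambda)=f(x-\lambda\nabla f(x))$. Let $x_0\in\mathbb{R}^d$ and $x_{k+1}=x_k-\lambda_k\nabla f(x_k)$ with $\lambda_k=\max\{\lambda>0:\ \phi_{x_k}(2\lambda)\le\phi_{x_k}(\lambda)+\tfrac{\lambda}{2}\phi_{x_k}'(0)\}$ (assumed to be attained). Then $\lambda_k\ge 1/(3L)$ for all $k$, and there is a constant $D$ depending only on $x_0$, $x^*$, $L$ such that $f(x_k)-f(x^* )\le D/k$ for all $k\ge1$. (This is the case $h\equiv0$ of the non-accelerated composite scheme, for which $G^{f}_{\lambda h}=\nabla f$.)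
   Context: $\mathbb{R}^d$ carries the standard inner product and Euclidean norm $\|\cdot\|$; $\phi_x'(0)=-\|\nabla f(x)\|^2$ denotes the derivative of $\phi_x$ at $0$. *)

theory Defs
  imports "HOL-Analysis.Analysis"
begin

definition phi :: "('a::real_normed_vector \<Rightarrow> real) \<Rightarrow> ('a \<Rightarrow> 'a) \<Rightarrow> 'a \<Rightarrow> real \<Rightarrow> real" where
  "phi f g x t = f (x - t *\<^sub>R g x)"

text \<open>Admissible step sizes: lambda > 0 with phi_x(2 lambda) <= phi_x(lambda) + lambda/2 phi_x'(0),
  where phi_x'(0) = - norm(grad f x)^2.\<close>
definition step_set :: "('a::real_inner \<Rightarrow> real) \<Rightarrow> ('a \<Rightarrow> 'a) \<Rightarrow> 'a \<Rightarrow> real set" where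
  "step_set f g x = {t. t > 0 \<and>
      phi f g x (2 * t) \<le> phi f g x t + t / 2 * (- (norm (g x))\<^sup>2)}"

definition is_max_step :: "('a::real_inner \<Rightarrow> real) \<Rightarrow> ('a \<Rightarrow> 'a) \<Rightarrow> 'a \<Rightarrow> real \<Rightarrow> bool" where
  "is_max_step f g x t \<longleftrightarrow> t \<in> step_set f g x \<and> (\<forall>\<mu>\<in>step_set f g x. \<mu> \<le> t)"

end

theory Submission
  imports Defs
begin

text \<open>
  Write g = grad f(x). The Lipschitz gradient gives
  f(x - 2 t g) <= f(x - t g) - t |g|^2 + (3/2) L t^2 |g|^2 along the ray, so every t <= 1/(3L) is
  admissible and the maximal step is at least 1/(3L). Convexity at the midpoint x - t g of x and
  x - 2 t g turns the acceptance test into the sufficient decrease f(x_(k+1)) <= f(x_k) - (t_k/2) |g|^2.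
  Together with the gradient inequality of convexity this yields
  2 t_k (f(x_(k+1)) - f(x*)) <= |x_k - x*|^2 - |x_(k+1) - x*|^2, which telescopes, since f(x_k)
  decreases, to f(x_k) - f(x*) <= 3 L |x_0 - x*|^2 / (2 k).
\<close>

lemma has_real_derivative_along_line:
  assumes "\<forall>y. GDERIV f y :> grad y"
  shows "((\<lambda>s. f (x + s *\<^sub>R v)) has_real_derivative (grad (x + s *\<^sub>R v) \<bullet> v)) (at s within S)"
proof -
  have "((\<lambda>s. x + s *\<^sub>R v) has_derivative (\<lambda>h. h *\<^sub>R v)) (at s within S)"
    by (auto intro!: derivative_eq_intros)
  moreover have "(f has_derivative (\<lambda>h. h \<bullet> grad (x + s *\<^sub>R v))) (at (x + s *\<^sub>R v))"
    using assms by (simp add: gderiv_def)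
  ultimately have "((\<lambda>s. f (x + s *\<^sub>R v)) has_derivative (\<lambda>h. (h *\<^sub>R v) \<bullet> grad (x + s *\<^sub>R v)))
      (at s within S)"
    by (rule has_derivative_compose[unfolded o_def])
  then show ?thesis
    by (simp add: has_field_derivative_def inner_commute mult_commute_abs)
qed

lemma convex_on_line:
  assumes "convex_on UNIV f"
  shows "convex_on UNIV (\<lambda>s::real. f (x + s *\<^sub>R v))"
proof (rule convex_onI)
  fix t a b :: real
  assume "0 < t" "t < 1"
  have "x + ((1 - t) * a + t * b) *\<^sub>R v = (1 - t) *\<^sub>R (x + a *\<^sub>R v) + t *\<^sub>R (x + b *\<^sub>R v)"
    by (simp add: algebra_simps)
  with assms \<open>0 < t\<close> \<open>t < 1\<close>
  show "f (x + ((1 - t) *\<^sub>R a + t *\<^sub>R b) *\<^sub>R v) \<le> (1 - t) * f (x + a *\<^sub>R v) + t * f (x + b *\<^sub>R v)"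
    by (auto intro: convex_onD)
qed auto

lemma convex_on_gradient_inequality:
  assumes "convex_on UNIV f" "\<forall>y. GDERIV f y :> grad y"
  shows "grad x \<bullet> (z - x) \<le> f z - f x"
proof -
  have "grad x \<bullet> (z - x) * (1 - 0) \<le> f (x + 1 *\<^sub>R (z - x)) - f (x + 0 *\<^sub>R (z - x))"
    using has_real_derivative_along_line[OF assms(2), of x "z - x" 0]
    by (intro convex_on_imp_above_tangent[OF convex_on_line[OF assms(1)]]) auto
  then show ?thesis
    by simp
qed

lemma gradient_zero_at_minimum:
  assumes "GDERIV f xs :> g" "\<forall>y. f xs \<le> f y"
  shows "g = 0"
proof -
  have "(\<lambda>h. h \<bullet> g) = (\<lambda>h. 0)"
    using assms by (intro has_derivative_local_min) (auto simp: gderiv_def)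
  then have "g \<bullet> g = 0"
    by metis
  then show ?thesis
    by simp
qed

lemma lipschitz_gradient_double_step:
  assumes deriv: "\<forall>y. GDERIV f y :> grad y"
    and lipschitz: "\<forall>y z. norm (grad y - grad z) \<le> L * norm (y - z)"
    and "0 \<le> t"
  shows "f (x - (2 * t) *\<^sub>R grad x)
    \<le> f (x - t *\<^sub>R grad x) - t * (norm (grad x))\<^sup>2 + 3 / 2 * L * t\<^sup>2 * (norm (grad x))\<^sup>2"
proof -
  define g where "g = grad x"
  define \<psi> where "\<psi> s = f (x + s *\<^sub>R (- g)) + s * (norm g)\<^sup>2 - L * (norm g)\<^sup>2 * s\<^sup>2 / 2" for s
  have "\<psi> (2 * t) \<le> \<psi> t"
  proof (rule DERIV_nonpos_imp_nonincreasing[of t "2 * t" \<psi>])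
    fix s
    assume s: "t \<le> s" "s \<le> 2 * t"
    define y where "y = x + s *\<^sub>R (- g)"
    have "(\<psi> has_real_derivative (grad y \<bullet> (- g) + (norm g)\<^sup>2 - L * (norm g)\<^sup>2 * s)) (at s)"
      unfolding \<psi>_def y_def
      by (rule derivative_eq_intros has_real_derivative_along_line[OF deriv] refl)+
        (simp_all add: power2_eq_square algebra_simps)
    moreover have "grad y \<bullet> (- g) + (norm g)\<^sup>2 - L * (norm g)\<^sup>2 * s \<le> 0"
    proof -
      have "grad y \<bullet> (- g) + (norm g)\<^sup>2 = (g - grad y) \<bullet> g"
        by (simp add: inner_diff_left power2_norm_eq_inner)
      also have "\<dots> \<le> norm (g - grad y) * norm g"
        by (rule norm_cauchy_schwarz)
      also have "\<dots> \<le> L * norm (x - y) * norm g"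
        using lipschitz unfolding g_def by (simp add: mult_right_mono)
      also have "\<dots> = L * (norm g)\<^sup>2 * s"
        using s \<open>0 \<le> t\<close> by (simp add: y_def power2_eq_square)
      finally show ?thesis
        by simp
    qed
    ultimately show "\<exists>d. (\<psi> has_real_derivative d) (at s) \<and> d \<le> 0"
      by blast
  qed (use \<open>0 \<le> t\<close> in simp)
  then show ?thesis
    by (simp add: \<psi>_def g_def power2_eq_square algebra_simps)
qed

lemma inverse_three_lipschitz_in_step_set:
  assumes "\<forall>y. GDERIV f y :> grad y"
    and "\<forall>y z. norm (grad y - grad z) \<le> L * norm (y - z)"
    and "0 < L"
  shows "1 / (3 * L) \<in> step_set f grad x"
proof -
  define t where "t = 1 / (3 * L)"
  have "3 / 2 * L * t\<^sup>2 = t / 2"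
    using \<open>0 < L\<close> by (simp add: t_def power2_eq_square field_simps)
  then have "f (x - (2 * t) *\<^sub>R grad x) \<le> f (x - t *\<^sub>R grad x) + t / 2 * - (norm (grad x))\<^sup>2"
    using lipschitz_gradient_double_step[OF assms(1,2), of t x] \<open>0 < L\<close>
    by (simp add: t_def algebra_simps)
  then show ?thesis
    using \<open>0 < L\<close> by (simp add: step_set_def phi_def t_def)
qed

lemma is_max_step_gradient_nonzero:
  assumes "is_max_step f grad x t"
  shows "grad x \<noteq> 0"
proof
  assume "grad x = 0"
  then have "t + 1 \<in> step_set f grad x"
    using assms by (auto simp: is_max_step_def step_set_def phi_def)
  with assms show False
    by (auto simp: is_max_step_def)
qed

text \<open>Otherwise the gradient would be constant, hence equal to its value 0 at the minimizer.\<close>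

lemma lipschitz_constant_pos:
  assumes "\<forall>y. GDERIV f y :> grad y"
    and "\<forall>y z. norm (grad y - grad z) \<le> L * norm (y - z)"
    and "\<forall>y. f xs \<le> f y"
    and "grad x \<noteq> 0"
  shows "0 < L"
proof (rule ccontr)
  assume "\<not> 0 < L"
  then have "norm (grad x - grad xs) \<le> 0"
    using assms(2) by (smt (verit) mult_nonpos_nonneg norm_ge_zero)
  moreover have "grad xs = 0"
    using assms(1,3) by (blast intro: gradient_zero_at_minimum)
  ultimately show False
    using assms(4) by simp
qed

lemma is_max_step_sufficient_decrease:
  assumes "convex_on UNIV f" "is_max_step f grad x t"
  shows "f (x - t *\<^sub>R grad x) \<le> f x - t / 2 * (norm (grad x))\<^sup>2"
proof -
  have "x - t *\<^sub>R grad x = (1 - 1 / 2) *\<^sub>R x + (1 / 2 :: real) *\<^sub>R (x - (2 * t) *\<^sub>R grad x)"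
    by (simp add: algebra_simps flip: scaleR_add_left)
  then have "f (x - t *\<^sub>R grad x) \<le> (1 - 1 / 2) * f x + 1 / 2 * f (x - (2 * t) *\<^sub>R grad x)"
    using convex_onD[OF assms(1), of "1 / 2" x "x - (2 * t) *\<^sub>R grad x"] by simp
  then show ?thesis
    using assms(2) by (simp add: is_max_step_def step_set_def phi_def)
qed

lemma power2_norm_diff_scaleR:
  "(norm (a - t *\<^sub>R g))\<^sup>2 = (norm a)\<^sup>2 - 2 * t * (g \<bullet> a) + t\<^sup>2 * (norm g)\<^sup>2"
  unfolding power2_norm_eq_inner by (simp add: inner_diff inner_commute power2_eq_square algebra_simps)

lemma sufficient_decrease_imp_distance_decrease:
  assumes "convex_on UNIV f" "\<forall>y. GDERIV f y :> grad y" "0 \<le> t"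
    and decrease: "f (x - t *\<^sub>R grad x) \<le> f x - t / 2 * (norm (grad x))\<^sup>2"
  shows "2 * t * (f (x - t *\<^sub>R grad x) - f xs)
    \<le> (norm (x - xs))\<^sup>2 - (norm (x - t *\<^sub>R grad x - xs))\<^sup>2"
proof -
  define g where "g = grad x"
  have "f x - f xs \<le> g \<bullet> (x - xs)"
    using convex_on_gradient_inequality[OF assms(1,2), of x xs]
    by (simp add: g_def inner_diff_right)
  then have "f (x - t *\<^sub>R g) - f xs \<le> g \<bullet> (x - xs) - t / 2 * (norm g)\<^sup>2"
    using decrease by (simp add: g_def)
  then have "2 * t * (f (x - t *\<^sub>R g) - f xs) \<le> 2 * t * (g \<bullet> (x - xs) - t / 2 * (norm g)\<^sup>2)"
    using \<open>0 \<le> t\<close> by (simp add: mult_left_mono)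
  also have "\<dots> = (norm (x - xs))\<^sup>2 - (norm ((x - xs) - t *\<^sub>R g))\<^sup>2"
    unfolding power2_norm_diff_scaleR by (simp add: power2_eq_square algebra_simps)
  also have "(x - xs) - t *\<^sub>R g = x - t *\<^sub>R g - xs"
    by simp
  finally show ?thesis
    by (simp add: g_def)
qed

lemma telescoping_rate:
  fixes e d :: "nat \<Rightarrow> real"
  assumes "0 \<le> c" "\<And>k. e (Suc k) \<le> e k" "\<And>k. c * e (Suc k) \<le> d k - d (Suc k)"
  shows "c * real n * e n + d n \<le> d 0"
proof (induction n)
  case (Suc n)
  have "c * real n * e (Suc n) \<le> c * real n * e n"
    using assms(1,2) by (simp add: mult_left_mono)
  then show ?case
    using Suc assms(3)[of n] by (simp add: algebra_simps)
qed simp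

lemma max_step_ge_inverse_three_lipschitz:
  assumes "\<forall>y. GDERIV f y :> grad y"
    and "\<forall>y z. norm (grad y - grad z) \<le> L * norm (y - z)"
    and "\<forall>y. f xs \<le> f y" "is_max_step f grad x t"
  shows "1 / (3 * L) \<le> t"
proof -
  have "0 < L"
    using lipschitz_constant_pos[OF assms(1-3) is_max_step_gradient_nonzero[OF assms(4)]] .
  then have "1 / (3 * L) \<in> step_set f grad x"
    by (rule inverse_three_lipschitz_in_step_set[OF assms(1,2)])
  then show ?thesis
    using assms(4) by (simp add: is_max_step_def)
qed

lemma max_step_distance_decrease:
  assumes "convex_on UNIV f" "\<forall>y. GDERIV f y :> grad y"
    and "\<forall>y z. norm (grad y - grad z) \<le> L * norm (y - z)"
    and "\<forall>y. f xs \<le> f y" "is_max_step f grad x t"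
  shows "2 / (3 * L) * (f (x - t *\<^sub>R grad x) - f xs)
    \<le> (norm (x - xs))\<^sup>2 - (norm (x - t *\<^sub>R grad x - xs))\<^sup>2"
proof -
  have "2 / (3 * L) * (f (x - t *\<^sub>R grad x) - f xs) \<le> 2 * t * (f (x - t *\<^sub>R grad x) - f xs)"
    using max_step_ge_inverse_three_lipschitz[OF assms(2-5)] assms(4)
    by (intro mult_right_mono) auto
  also have "\<dots> \<le> (norm (x - xs))\<^sup>2 - (norm (x - t *\<^sub>R grad x - xs))\<^sup>2"
    using assms(5)
    by (intro sufficient_decrease_imp_distance_decrease is_max_step_sufficient_decrease assms(1,2))
      (auto simp: is_max_step_def step_set_def)
  finally show ?thesis .
qed

lemma max_step_decrease:
  assumes "convex_on UNIV f" "is_max_step f grad x t"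
  shows "f (x - t *\<^sub>R grad x) \<le> f x"
proof -
  have "0 \<le> t / 2 * (norm (grad x))\<^sup>2"
    using assms(2) by (simp add: is_max_step_def step_set_def)
  then show ?thesis
    using is_max_step_sufficient_decrease[OF assms] by linarith
qed

lemma max_step_descent_rate:
  assumes convex: "convex_on UNIV f" and deriv: "\<forall>y. GDERIV f y :> grad y"
    and lipschitz: "\<forall>y z. norm (grad y - grad z) \<le> L * norm (y - z)"
    and minimum: "\<forall>y. f xs \<le> f y"
    and max_step: "\<forall>k. is_max_step f grad (x k) (lam k)"
    and iterate: "\<forall>k. x (Suc k) = x k - lam k *\<^sub>R grad (x k)"
    and "1 \<le> k"
  shows "f (x k) - f xs \<le> 3 * L / 2 * (norm (x 0 - xs))\<^sup>2 / real k"
proof -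
  have "0 < L"
    using lipschitz_constant_pos[OF deriv lipschitz minimum] is_max_step_gradient_nonzero max_step
    by blast
  have "2 / (3 * L) * real k * (f (x k) - f xs) + (norm (x k - xs))\<^sup>2 \<le> (norm (x 0 - xs))\<^sup>2"
  proof (rule telescoping_rate)
    show "f (x (Suc j)) - f xs \<le> f (x j) - f xs" for j
      using max_step_decrease[OF convex] max_step iterate by simp
    show "2 / (3 * L) * (f (x (Suc j)) - f xs) \<le> (norm (x j - xs))\<^sup>2 - (norm (x (Suc j) - xs))\<^sup>2"
      for j
      using max_step_distance_decrease[OF convex deriv lipschitz minimum] max_step iterate by simp
  qed (use \<open>0 < L\<close> in simp)
  then have "2 / (3 * L) * real k * (f (x k) - f xs) \<le> (norm (x 0 - xs))\<^sup>2"
    using zero_le_power2[of "norm (x k - xs)"] by linarith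
  then show ?thesis
    using \<open>0 < L\<close> \<open>1 \<le> k\<close> by (simp add: field_simps)
qed

theorem corollary2p4:
  "\<exists>D :: 'a::euclidean_space \<Rightarrow> 'a \<Rightarrow> real \<Rightarrow> real.
    \<forall>(f :: 'a \<Rightarrow> real) (grad :: 'a \<Rightarrow> 'a) (L :: real) (xs :: 'a) (x0 :: 'a)
      (x :: nat \<Rightarrow> 'a) (lam :: nat \<Rightarrow> real).
      convex_on UNIV f \<and>
      (\<forall>y. GDERIV f y :> grad y) \<and>
      (\<forall>y z. norm (grad y - grad z) \<le> L * norm (y - z)) \<and>
      (\<forall>c. bounded {y. f y \<le> c}) \<and>
      (\<forall>y. f xs \<le> f y) \<and>
      x 0 = x0 \<and>
      (\<forall>k. is_max_step f grad (x k) (lam k)) \<and>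
      (\<forall>k. x (Suc k) = x k - lam k *\<^sub>R grad (x k))
      \<longrightarrow> (\<forall>k. lam k \<ge> 1 / (3 * L)) \<and>
          (\<forall>k\<ge>1. f (x k) - f xs \<le> D x0 xs L / real k)"
proof (intro exI[of _ "\<lambda>x0 xs L. 3 * L / 2 * (norm (x0 - xs))\<^sup>2"] allI impI, elim conjE)
  fix f :: "'a \<Rightarrow> real" and grad L xs x0 x lam
  assume "convex_on UNIV f" "\<forall>y. GDERIV f y :> grad y"
    and "\<forall>y z. norm (grad y - grad z) \<le> L * norm (y - z)"
    and "\<forall>y. f xs \<le> f y" "x 0 = x0" "\<forall>k. is_max_step f grad (x k) (lam k)"
    and "\<forall>k. x (Suc k) = x k - lam k *\<^sub>R grad (x k)"
  then show "(\<forall>k. 1 / (3 * L) \<le> lam k) \<and>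
      (\<forall>k\<ge>1. f (x k) - f xs \<le> 3 * L / 2 * (norm (x0 - xs))\<^sup>2 / real k)"
    using max_step_ge_inverse_three_lipschitz max_step_descent_rate by blast
qed

end
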